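(* Let $\mathbf{B}$ be a 2-element algebra with universe $\{0,1\}$ such that at least one of the following holds: (1) $\mathsf{MPT}_0^{\infty} \preceq \mathbf{B}$, (2) $\mathsf{MPT}_1^{\infty} \preceq \mathbf{B}$, or (3) $\mathsf{AP} \preceq \mathbf{B}$. Let $\mathbf{A} = \mathbf{B}^n$. Then the quantum circuit $\mathrm{Simon}_\phi(n)$ solves $\mathrm{HKP}(\mathbf{A})$ with probability $1 - 1/\tau$ using $\Theta(n + \lg \tau)$ iterations of the circuit.
   Context: An algebra is a set with finitely many finitary operations; similar algebras have corresponding operations of equal arities. A congruence of an algebra is an equivalence relation on its universe compatible with all operations; the kernel of a homomorphism $\phi$ is $\ker(\phi)=\{(a,b): \phi(a)=\phi(b)\}$. The clone $\mathrm{Clo}(\mathbf{B})$ of term operations of $\mathbf{B}$ is the smallest set of operations on $B$ containing the operations of $\mathbf{B}$ and all projections and closed under composition. For a set $F$ of Boolean operations, the clone generated by $F$ is the smallest clone on $\{0,1\}$ containing $F$. For a clone $\mathcal{C}$ on $\{0,1\}$ write $\mathcal{C}\preceq \mathbf{B}$ if $\mathcal{C}\subseteq \mathrm{Clo}(\mathbf{B})$. Here $\mathsf{MPT}_0^\infty$ is the clone generated by $x \vee (y\wedge z)$, $\mathsf{MPT}_1^\infty$ is the clone generated by $x\wedge(y\vee z)$, and $\mathsf{AP}$ is the clone generated by $x+y+z$ (addition modulo 2). $\mathbf{B}^n$ is the direct power with operations acting coordinatewise; its elements are identified with bit strings in $\{0,1\}^n$. The Hidden Kernel Problem $\mathrm{HKP}(\mathbf{A})$: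 given a similar algebra $\mathbf{C}$ and a homomorphism $\phi:\mathbf{A}\to\mathbf{C}$ accessible only as an oracle (black box), determine the congruence $\ker(\phi)$ (e.g. by a generating set). The circuit $\mathrm{Simon}_\phi(n)$: regard $\phi$ as a function $\{0,1\}^n\to\{0,1\}^m$ (elements of the codomain encoded as bit strings, $m\le n$ possible). Let $\widehat{\phi}$ be the unitary on $n+m$ qubits with $\widehat{\phi}(|x\rangle\otimes|y\rangle)=|x\rangle\otimes|y+\phi(x)\rangle$ ($+$ componentwise mod 2). The circuit applies $(H^{\otimes n}\otimes I_m)\,\widehat{\phi}\,(H^{\otimes n}\otimes I_m)$ to $|0^n\rangle\otimes|0^m\rangle$, where $H$ is the Hadamard gate, and then measures the first $n$ qubits; an iteration is one run of this circuit (with classical post-processing of the measurement results). *)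

theory Defs
  imports Complex_Main
begin

type_synonym 'a oper = "nat \<times> ('a list \<Rightarrow> 'a)"

inductive_set term_ops :: "'a oper list \<Rightarrow> nat \<Rightarrow> ('a list \<Rightarrow> 'a) set"
  for ops :: "'a oper list" and k :: nat where
  proj: "i < k \<Longrightarrow> (\<lambda>xs. xs ! i) \<in> term_ops ops k"
| comp: "(r, f) \<in> set ops \<Longrightarrow> length gs = r \<Longrightarrow> (\<forall>g\<in>set gs. g \<in> term_ops ops k)
          \<Longrightarrow> (\<lambda>xs. f (map (\<lambda>g. g xs) gs)) \<in> term_ops ops k"

text \<open>The clone generated by F is contained in Clo(B) (operations compared as functions on {0,1}^k).\<close>
definition clone_below :: "bool oper list \<Rightarrow> bool oper list \<Rightarrow> bool" where
  "clone_below F ops \<longleftrightarrow>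
     (\<forall>k. \<forall>t\<in>term_ops F k. \<exists>s\<in>term_ops ops k. \<forall>xs. length xs = k \<longrightarrow> t xs = s xs)"

definition MPT0_gen :: "bool oper list" where
  "MPT0_gen = [(3, \<lambda>xs. xs!0 \<or> (xs!1 \<and> xs!2))]"

definition MPT1_gen :: "bool oper list" where
  "MPT1_gen = [(3, \<lambda>xs. xs!0 \<and> (xs!1 \<or> xs!2))]"

definition AP_gen :: "bool oper list" where
  "AP_gen = [(3, \<lambda>xs. (xs!0 \<noteq> xs!1) \<noteq> xs!2)]"

text \<open>Bit strings of length n; universe of B^n (0 = False, 1 = True).\<close>
definition bits :: "nat \<Rightarrow> bool list set" where
  "bits n = {xs. length xs = n}"

definition power_op :: "nat \<Rightarrow> (bool list \<Rightarrow> bool) \<Rightarrow> bool list list \<Rightarrow> bool list" where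
  "power_op n f as = map (\<lambda>i. f (map (\<lambda>a. a ! i) as)) [0..<n]"

definition is_algebra :: "'c set \<Rightarrow> 'c oper list \<Rightarrow> bool" where
  "is_algebra carr ops \<longleftrightarrow>
     (\<forall>(r, f)\<in>set ops. \<forall>as. length as = r \<and> set as \<subseteq> carr \<longrightarrow> f as \<in> carr)"

definition similar :: "'a oper list \<Rightarrow> 'c oper list \<Rightarrow> bool" where
  "similar opsA opsC \<longleftrightarrow> map fst opsA = map fst opsC"

definition is_hom_power :: "nat \<Rightarrow> bool oper list \<Rightarrow> 'c set \<Rightarrow> 'c oper list \<Rightarrow> (bool list \<Rightarrow> 'c) \<Rightarrow> bool" where
  "is_hom_power n opsB carrC opsC phi \<longleftrightarrow>
     (\<forall>a\<in>bits n. phi a \<in> carrC) \<and>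
     (\<forall>j<length opsB. \<forall>as. length as = fst (opsB ! j) \<and> set as \<subseteq> bits n \<longrightarrow>
         phi (power_op n (snd (opsB ! j)) as) = snd (opsC ! j) (map phi as))"

definition kernel :: "nat \<Rightarrow> (bool list \<Rightarrow> 'c) \<Rightarrow> (bool list \<times> bool list) set" where
  "kernel n phi = {(a, b). a \<in> bits n \<and> b \<in> bits n \<and> phi a = phi b}"

section \<open>The circuit Simon_phi(n), states as amplitude functions on |x> (n qubits) \<otimes> |y> (m qubits)\<close>

definition dotp :: "bool list \<Rightarrow> bool list \<Rightarrow> nat" where
  "dotp x y = length (filter id (map2 (\<and>) x y))"

definition xorl :: "bool list \<Rightarrow> bool list \<Rightarrow> bool list" where
  "xorl y z = map2 (\<noteq>) y z"

definition hadamard_first :: "nat \<Rightarrow> (bool list \<Rightarrow> bool list \<Rightarrow> complex) \<Rightarrow> bool list \<Rightarrow> bool list \<Rightarrow> complex" where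
  "hadamard_first n psi = (\<lambda>x y. (1 / complex_of_real (sqrt (2 ^ n))) *
      (\<Sum>x'\<in>bits n. (-1) ^ dotp x x' * psi x' y))"

text \<open>The unitary phi-hat: |x>|y> \<mapsto> |x>|y + phi(x)>\<close>
definition oracle_gate :: "(bool list \<Rightarrow> bool list) \<Rightarrow> (bool list \<Rightarrow> bool list \<Rightarrow> complex) \<Rightarrow> bool list \<Rightarrow> bool list \<Rightarrow> complex" where
  "oracle_gate f psi = (\<lambda>x y. psi x (xorl y (f x)))"

definition init_state :: "nat \<Rightarrow> nat \<Rightarrow> bool list \<Rightarrow> bool list \<Rightarrow> complex" where
  "init_state n m = (\<lambda>x y. if x = replicate n False \<and> y = replicate m False then 1 else 0)"

definition simon_state :: "nat \<Rightarrow> nat \<Rightarrow> (bool list \<Rightarrow> bool list) \<Rightarrow> bool list \<Rightarrow> bool list \<Rightarrow> complex" where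
  "simon_state n m f = hadamard_first n (oracle_gate f (hadamard_first n (init_state n m)))"

definition simon_prob :: "nat \<Rightarrow> nat \<Rightarrow> (bool list \<Rightarrow> bool list) \<Rightarrow> bool list \<Rightarrow> real" where
  "simon_prob n m f x = (\<Sum>y\<in>bits m. (cmod (simon_state n m f x y))\<^sup>2)"

text \<open>Probability that k independent iterations followed by classical post-processing
  post (applied to the list of measurement results) output the relation target.\<close>
definition success_prob :: "nat \<Rightarrow> nat \<Rightarrow> (bool list \<Rightarrow> bool list) \<Rightarrow> (bool list list \<Rightarrow> 'r)
     \<Rightarrow> nat \<Rightarrow> 'r \<Rightarrow> real" where
  "success_prob n m f post k target =
     (\<Sum>ys\<in>{ys. length ys = k \<and> set ys \<subseteq> bits n}.
        (\<Prod>i<k. simon_prob n m f (ys ! i)) * (if post ys = target then 1 else 0))"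

end

(*
  A homomorphism phi out of B^n has a kernel that is compatible with the coordinatewise term
  operations of B. With x \<or> (y \<and> z) one can replace a by b in a kernel pair (a, b) twice and
  thereby push any c to c \<or> (a \<oplus> b), which is also where c \<oplus> a \<oplus> b goes; dually for
  x \<and> (y \<or> z), and x + y + z gives the shift directly. So in all three cases phi is constant
  exactly on the cosets of a subgroup D of (Z/2)^n, i.e. phi is an instance of Simon's problem.
  Simon's circuit then outputs a vector x with probability |D| / 2^n if x is orthogonal to D and
  0 otherwise. Post-processing returns all pairs whose difference is orthogonal to every sample;
  this contains the kernel and differs from it only if some d \<notin> D is orthogonal to all k
  samples, an event of probability 2^-k for each of the at most 2^n candidates d. Hence
  k = \<lceil>n + log \<tau>\<rceil> iterations fail with probability at most 1/\<tau>.
*)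

theory Submission
  imports Defs
begin

section \<open>Bit vectors\<close>

lemma bits_eq_lists: "bits n = {xs. set xs \<subseteq> UNIV \<and> length xs = n}"
  by (simp add: bits_def)

lemma finite_bits [simp]: "finite (bits n)"
  unfolding bits_eq_lists by (rule finite_lists_length_eq) simp

lemma card_bits: "card (bits n) = 2 ^ n"
  using card_lists_length_eq[of "UNIV :: bool set" n] by (simp add: bits_eq_lists)

lemma replicate_False_in_bits [simp]: "replicate n False \<in> bits n"
  by (simp add: bits_def)

lemma map_upt_in_bits [simp]: "map f [0..<n] \<in> bits n"
  by (simp add: bits_def)

lemma length_xorl [simp]: "length (xorl a b) = min (length a) (length b)"
  by (simp add: xorl_def)

lemma map_nth_upt_bits [simp]: "c \<in> bits n \<Longrightarrow> map (\<lambda>i. c ! i) [0..<n] = c"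
  using map_nth[of c] by (simp add: bits_def)

lemma xorl_in_bits [simp]: "a \<in> bits n \<Longrightarrow> b \<in> bits n \<Longrightarrow> xorl a b \<in> bits n"
  by (simp add: bits_def xorl_def)

lemma xorl_xorl_cancel: "length a = length b \<Longrightarrow> xorl a (xorl a b) = b"
  by (rule nth_equalityI) (auto simp: xorl_def)

lemma xorl_replicate_False: "xorl c (replicate (length c) False) = c"
  by (rule nth_equalityI) (auto simp: xorl_def)

lemma xorl_eq_replicate_False_iff:
  "length y = length z \<Longrightarrow> xorl y z = replicate (length y) False \<longleftrightarrow> y = z"
  by (auto simp: xorl_def list_eq_iff_nth_eq)

lemma dotp_Nil [simp]: "dotp [] y = 0" "dotp x [] = 0"
  by (simp_all add: dotp_def)

lemma dotp_Cons [simp]: "dotp (a # x) (b # y) = (if a \<and> b then 1 else 0) + dotp x y"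
  by (simp add: dotp_def)

lemma dotp_replicate_False [simp]: "dotp x (replicate n False) = 0"
proof (induction x arbitrary: n)
  case (Cons a x)
  then show ?case by (cases n) auto
qed simp

lemma parity_dotp_xorl:
  assumes "length x = length u" "length u = length v"
  shows "(-1::real) ^ dotp x (xorl u v) = (-1) ^ dotp x u * (-1) ^ dotp x v"
  using assms
proof (induction x arbitrary: u v)
  case (Cons a x)
  then obtain b u' c v' where "u = b # u'" "v = c # v'"
    by (metis length_Suc_conv)
  with Cons show ?case
    by (auto simp: xorl_def power_add)
qed simp

lemma parity_dotp_xorl_cancel:
  assumes "length x = length u" "length u = length v"
  shows "(-1::real) ^ dotp x u * (-1) ^ dotp x (xorl u v) = (-1) ^ dotp x v"
proof -
  have "(-1::real) ^ dotp x u * (-1) ^ dotp x u = 1"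
    by (simp flip: power_add)
  then show ?thesis
    using parity_dotp_xorl[OF assms] by (simp add: mult.assoc[symmetric])
qed

lemma sum_bits_Suc: "(\<Sum>x\<in>bits (Suc n). g x) = (\<Sum>x\<in>bits n. g (True # x) + g (False # x))"
proof -
  have bits_Suc: "bits (Suc n) = Cons True ` bits n \<union> Cons False ` bits n"
    by (auto simp: bits_def length_Suc_conv)
  have "(\<Sum>x\<in>bits (Suc n). g x) = (\<Sum>x\<in>Cons True ` bits n. g x) + (\<Sum>x\<in>Cons False ` bits n. g x)"
    unfolding bits_Suc by (subst sum.union_disjoint) auto
  then show ?thesis
    by (simp add: sum.reindex sum.distrib)
qed

lemma sum_bits_parity:
  "d \<in> bits n \<Longrightarrow> (\<Sum>x\<in>bits n. (-1::real) ^ dotp x d) = (if d = replicate n False then 2 ^ n else 0)"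
proof (induction n arbitrary: d)
  case 0
  then show ?case by (simp add: bits_def)
next
  case (Suc n)
  then obtain b d' where "d = b # d'" "d' \<in> bits n"
    by (cases d) (auto simp: bits_def)
  with Suc.IH show ?case
    by (auto simp: sum_bits_Suc sum.distrib sum_negf card_bits)
qed

lemma sum_bits_xorl_shift: "a \<in> bits n \<Longrightarrow> (\<Sum>d\<in>bits n. h (xorl a d)) = (\<Sum>d\<in>bits n. h d)"
  by (rule sum.reindex_bij_witness[where i="xorl a" and j="xorl a"])
     (auto simp: bits_def xorl_xorl_cancel)

lemma sum_lists_length_eq_prod:
  fixes g :: "'a \<Rightarrow> 'b :: comm_semiring_1"
  assumes "finite A"
  shows "(\<Sum>ys\<in>{ys. length ys = k \<and> set ys \<subseteq> A}. \<Prod>i<k. g (ys ! i)) = (\<Sum>x\<in>A. g x) ^ k"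
proof (induction k)
  case 0
  have "{ys. length ys = 0 \<and> set ys \<subseteq> A} = {[]}" by auto
  then show ?case by simp
next
  case (Suc k)
  let ?L = "{ys. length ys = k \<and> set ys \<subseteq> A}"
  have L_Suc: "{ys. length ys = Suc k \<and> set ys \<subseteq> A} = (\<lambda>(x, ys). x # ys) ` (A \<times> ?L)"
    by (auto simp: image_iff length_Suc_conv)
  have inj: "inj_on (\<lambda>(x, ys). x # ys) (A \<times> ?L)"
    by (auto simp: inj_on_def)
  have "(\<Sum>ys\<in>{ys. length ys = Suc k \<and> set ys \<subseteq> A}. \<Prod>i<Suc k. g (ys ! i))
      = (\<Sum>(x, ys)\<in>A \<times> ?L. g x * (\<Prod>i<k. g (ys ! i)))"
    unfolding L_Suc sum.reindex[OF inj]
    by (rule sum.cong) (auto simp del: prod.lessThan_Suc simp add: prod.lessThan_Suc_shift)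
  also have "\<dots> = (\<Sum>x\<in>A. g x) * (\<Sum>ys\<in>?L. \<Prod>i<k. g (ys ! i))"
    by (simp add: sum.cartesian_product[symmetric] sum_product)
  finally show ?case
    using Suc by simp
qed

section \<open>Kernels of homomorphisms out of a direct power\<close>

lemma power_op_in_bits [simp]: "power_op n f as \<in> bits n"
  by (simp add: bits_def power_op_def)

lemma power_op_proj:
  assumes "set cs \<subseteq> bits n" "i < length cs"
  shows "power_op n (\<lambda>xs. xs ! i) cs = cs ! i"
proof -
  have "cs ! i \<in> bits n"
    using assms nth_mem by blast
  with assms(2) show ?thesis
    by (intro nth_equalityI) (auto simp: power_op_def bits_def)
qed

lemma power_op_comp:
  "power_op n (\<lambda>xs. f (map (\<lambda>g. g xs) gs)) cs = power_op n f (map (\<lambda>g. power_op n g cs) gs)"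
  by (rule nth_equalityI) (simp_all add: power_op_def comp_def)

lemma hom_power_term_ops_compatible:
  assumes hom: "is_hom_power n opsB carrC opsC phi"
    and s: "s \<in> term_ops opsB k"
  shows "length as = k \<Longrightarrow> length bs = k \<Longrightarrow> set as \<subseteq> bits n \<Longrightarrow> set bs \<subseteq> bits n \<Longrightarrow>
    map phi as = map phi bs \<Longrightarrow> phi (power_op n s as) = phi (power_op n s bs)"
  using s
proof (induction s arbitrary: as bs rule: term_ops.induct)
  case (proj i)
  then have "phi (as ! i) = phi (bs ! i)"
    by (metis nth_map)
  with proj show ?case
    by (simp add: power_op_proj)
next
  case (comp r f gs)
  obtain j where j: "j < length opsB" "opsB ! j = (r, f)"
    using comp.hyps(1) by (metis in_set_conv_nth)
  have phi_f: "phi (power_op n f cs) = snd (opsC ! j) (map phi cs)"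
    if "length cs = r" "set cs \<subseteq> bits n" for cs
    using hom j that unfolding is_hom_power_def by force
  have "phi (power_op n g as) = phi (power_op n g bs)" if "g \<in> set gs" for g
    using comp.IH that comp.prems by blast
  then have "map phi (map (\<lambda>g. power_op n g as) gs) = map phi (map (\<lambda>g. power_op n g bs) gs)"
    by simp
  then show ?case
    unfolding power_op_comp by (subst (1 2) phi_f) (auto simp: comp.hyps(2) simp del: map_map)
qed

lemma generator_in_term_ops: "(r, f) \<in> set F \<Longrightarrow> (\<lambda>xs. f (map ((!) xs) [0..<r])) \<in> term_ops F r"
  using term_ops.comp[of r f F "map (\<lambda>i xs. xs ! i) [0..<r]" r] by (simp add: term_ops.proj comp_def)

lemma hom_power_generator_compatible:
  assumes "clone_below F opsB" "is_hom_power n opsB carrC opsC phi" "(r, f) \<in> set F"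
    and "length as = r" "length bs = r" "set as \<subseteq> bits n" "set bs \<subseteq> bits n"
    and "map phi as = map phi bs"
  shows "phi (power_op n f as) = phi (power_op n f bs)"
proof -
  have "\<forall>t\<in>term_ops F r. \<exists>s\<in>term_ops opsB r. \<forall>xs. length xs = r \<longrightarrow> t xs = s xs"
    using assms(1) unfolding clone_below_def by (rule spec)
  then have "\<exists>s\<in>term_ops opsB r. \<forall>xs. length xs = r \<longrightarrow> f (map ((!) xs) [0..<r]) = s xs"
    using generator_in_term_ops[OF assms(3)] by (rule bspec)
  then obtain s where s: "s \<in> term_ops opsB r" and fs: "\<And>xs. length xs = r \<Longrightarrow> f xs = s xs"
    by (metis map_nth)
  have "power_op n f cs = power_op n s cs" if "length cs = r" for cs
    unfolding power_op_def using fs that by simp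
  then show ?thesis
    using hom_power_term_ops_compatible[OF assms(2) s assms(4-)] assms(4,5) by simp
qed

lemma hom_power_ternary_compatible:
  assumes "clone_below [(3, \<lambda>xs. f (xs ! 0) (xs ! 1) (xs ! 2))] opsB"
    and "is_hom_power n opsB carrC opsC phi"
    and "y \<in> bits n" "y' \<in> bits n" "phi y = phi y'"
  shows "phi (map (\<lambda>i. f (x i) (y ! i) (z i)) [0..<n]) = phi (map (\<lambda>i. f (x i) (y' ! i) (z i)) [0..<n])"
proof -
  have "power_op n (\<lambda>xs. f (xs ! 0) (xs ! 1) (xs ! 2)) [map x [0..<n], w, map z [0..<n]] =
      map (\<lambda>i. f (x i) (w ! i) (z i)) [0..<n]" for w
    by (simp add: power_op_def cong: map_cong)
  then show ?thesis
    using hom_power_generator_compatible[OF assms(1,2), of 3 _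
      "[map x [0..<n], y, map z [0..<n]]" "[map x [0..<n], y', map z [0..<n]]"] assms(3-)
    by simp
qed

definition xor_invariant :: "nat \<Rightarrow> (bool list \<Rightarrow> 'c) \<Rightarrow> bool" where
  "xor_invariant n phi \<longleftrightarrow>
     (\<forall>a\<in>bits n. \<forall>b\<in>bits n. \<forall>c\<in>bits n. phi a = phi b \<longrightarrow> phi c = phi (xorl c (xorl a b)))"

lemma xor_invariantI_absorbing:
  assumes absorb: "\<And>a b c. a \<in> bits n \<Longrightarrow> b \<in> bits n \<Longrightarrow> c \<in> bits n \<Longrightarrow> phi a = phi b \<Longrightarrow>
      phi c = phi (h a b c)"
    and h_xorl: "\<And>a b c. a \<in> bits n \<Longrightarrow> b \<in> bits n \<Longrightarrow> c \<in> bits n \<Longrightarrow>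
      h a b (xorl c (xorl a b)) = h a b c"
  shows "xor_invariant n phi"
  unfolding xor_invariant_def using absorb h_xorl by (metis xorl_in_bits)

lemma xor_invariant_if_MPT0:
  assumes cb: "clone_below MPT0_gen opsB" and hom: "is_hom_power n opsB carrC opsC phi"
  shows "xor_invariant n phi"
proof (rule xor_invariantI_absorbing)
  fix a b c assume ab: "a \<in> bits n" "b \<in> bits n" "phi a = phi b" and c: "c \<in> bits n"
  note compat = hom_power_ternary_compatible[where f="\<lambda>x y z. x \<or> (y \<and> z)",
      OF cb[unfolded MPT0_gen_def] hom ab]
  have "phi c = phi (map (\<lambda>i. c ! i \<or> (b ! i \<and> \<not> a ! i)) [0..<n])"
    using c compat[of "(!) c" "\<lambda>i. \<not> a ! i"] by simp
  also have "\<dots> = phi (map (\<lambda>i. c ! i \<or> (b ! i \<and> \<not> a ! i) \<or> (a ! i \<and> \<not> b ! i)) [0..<n])"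
    using compat[of "\<lambda>i. c ! i \<or> (b ! i \<and> \<not> a ! i)" "\<lambda>i. \<not> b ! i"] by simp
  finally show "phi c = phi (map (\<lambda>i. c ! i \<or> (b ! i \<and> \<not> a ! i) \<or> (a ! i \<and> \<not> b ! i)) [0..<n])" .
next
  fix a b c assume "a \<in> bits n" "b \<in> bits n" "c \<in> bits n"
  then show "map (\<lambda>i. xorl c (xorl a b) ! i \<or> (b ! i \<and> \<not> a ! i) \<or> (a ! i \<and> \<not> b ! i)) [0..<n] =
      map (\<lambda>i. c ! i \<or> (b ! i \<and> \<not> a ! i) \<or> (a ! i \<and> \<not> b ! i)) [0..<n]"
    by (auto simp: list_eq_iff_nth_eq xorl_def bits_def)
qed

lemma xor_invariant_if_MPT1:
  assumes cb: "clone_below MPT1_gen opsB" and hom: "is_hom_power n opsB carrC opsC phi"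
  shows "xor_invariant n phi"
proof (rule xor_invariantI_absorbing)
  fix a b c assume ab: "a \<in> bits n" "b \<in> bits n" "phi a = phi b" and c: "c \<in> bits n"
  note compat = hom_power_ternary_compatible[where f="\<lambda>x y z. x \<and> (y \<or> z)",
      OF cb[unfolded MPT1_gen_def] hom ab]
  have "phi c = phi (map (\<lambda>i. c ! i \<and> (b ! i \<or> \<not> a ! i)) [0..<n])"
    using c compat[of "(!) c" "\<lambda>i. \<not> a ! i"] by simp
  also have "\<dots> = phi (map (\<lambda>i. c ! i \<and> (b ! i \<or> \<not> a ! i) \<and> (a ! i \<or> \<not> b ! i)) [0..<n])"
    using compat[of "\<lambda>i. c ! i \<and> (b ! i \<or> \<not> a ! i)" "\<lambda>i. \<not> b ! i"] by (simp add: conj_assoc)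
  finally show "phi c = phi (map (\<lambda>i. c ! i \<and> (b ! i \<or> \<not> a ! i) \<and> (a ! i \<or> \<not> b ! i)) [0..<n])" .
next
  fix a b c assume "a \<in> bits n" "b \<in> bits n" "c \<in> bits n"
  then show "map (\<lambda>i. xorl c (xorl a b) ! i \<and> (b ! i \<or> \<not> a ! i) \<and> (a ! i \<or> \<not> b ! i)) [0..<n] =
      map (\<lambda>i. c ! i \<and> (b ! i \<or> \<not> a ! i) \<and> (a ! i \<or> \<not> b ! i)) [0..<n]"
    by (auto simp: list_eq_iff_nth_eq xorl_def bits_def)
qed

lemma xor_invariant_if_AP:
  assumes cb: "clone_below AP_gen opsB" and hom: "is_hom_power n opsB carrC opsC phi"
  shows "xor_invariant n phi"
  unfolding xor_invariant_def
proof (intro ballI impI)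
  fix a b c assume ab: "a \<in> bits n" "b \<in> bits n" "phi a = phi b" and c: "c \<in> bits n"
  have "phi (map (\<lambda>i. (c ! i \<noteq> b ! i) \<noteq> b ! i) [0..<n]) =
      phi (map (\<lambda>i. (c ! i \<noteq> a ! i) \<noteq> b ! i) [0..<n])"
    using hom_power_ternary_compatible[where f="\<lambda>x y z. (x \<noteq> y) \<noteq> z",
      OF cb[unfolded AP_gen_def] hom ab(2,1) ab(3)[symmetric]] by simp
  moreover have "map (\<lambda>i. (c ! i \<noteq> b ! i) \<noteq> b ! i) [0..<n] = c"
    using c by (auto simp: list_eq_iff_nth_eq bits_def)
  moreover have "map (\<lambda>i. (c ! i \<noteq> a ! i) \<noteq> b ! i) [0..<n] = xorl c (xorl a b)"
    using ab c by (auto simp: list_eq_iff_nth_eq xorl_def bits_def)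
  ultimately show "phi c = phi (xorl c (xorl a b))"
    by simp
qed

lemma hom_power_xor_invariant:
  assumes "clone_below MPT0_gen opsB \<or> clone_below MPT1_gen opsB \<or> clone_below AP_gen opsB"
    and "is_hom_power n opsB carrC opsC phi"
  shows "xor_invariant n phi"
  using assms xor_invariant_if_MPT0 xor_invariant_if_MPT1 xor_invariant_if_AP by blast

section \<open>The output distribution of Simon's circuit\<close>

lemma hadamard_first_init_state:
  "hadamard_first n (init_state n m) x y =
     (if y = replicate m False then 1 / complex_of_real (sqrt (2 ^ n)) else 0)"
proof -
  have "(\<Sum>x'\<in>bits n. (-1) ^ dotp x x' * init_state n m x' y) =
      (\<Sum>x'\<in>bits n. if x' = replicate n False then (if y = replicate m False then 1 else 0) else 0)"
    by (rule sum.cong) (auto simp: init_state_def)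
  then show ?thesis
    by (simp add: hadamard_first_def sum.delta')
qed

lemma simon_state_eq:
  assumes range: "\<And>a. a \<in> bits n \<Longrightarrow> phi a \<in> bits m" and y: "y \<in> bits m"
  shows "simon_state n m phi x y =
    complex_of_real ((\<Sum>x'\<in>bits n. if phi x' = y then (-1) ^ dotp x x' else 0) / 2 ^ n)"
proof -
  define s where "s = complex_of_real (sqrt (2 ^ n))"
  have s_square: "s * s = 2 ^ n"
    unfolding s_def by (simp flip: of_real_mult)
  have gate: "oracle_gate phi (hadamard_first n (init_state n m)) z y = (if phi z = y then 1 / s else 0)"
    if "z \<in> bits n" for z
    using range[OF that] y xorl_eq_replicate_False_iff[of y "phi z"]
    by (auto simp: oracle_gate_def hadamard_first_init_state s_def bits_def)
  have "simon_state n m phi x y = 1 / s * (\<Sum>x'\<in>bits n. (-1) ^ dotp x x' * (if phi x' = y then 1 / s else 0))"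
    unfolding simon_state_def hadamard_first_def[of n "oracle_gate _ _"] s_def[symmetric]
    by (simp add: gate cong: sum.cong)
  also have "\<dots> = (\<Sum>x'\<in>bits n. if phi x' = y then (-1) ^ dotp x x' else 0) / (s * s)"
    by (auto simp: sum_distrib_left sum_divide_distrib intro!: sum.cong)
  also have "\<dots> = complex_of_real ((\<Sum>x'\<in>bits n. if phi x' = y then (-1) ^ dotp x x' else 0) / 2 ^ n)"
    by (simp add: s_square if_distrib[of complex_of_real] cong: if_cong)
  finally show ?thesis .
qed

lemma simon_prob_eq_collisions:
  assumes range: "\<And>a. a \<in> bits n \<Longrightarrow> phi a \<in> bits m"
  shows "simon_prob n m phi x =
    (\<Sum>x'\<in>bits n. \<Sum>x''\<in>bits n.
       if phi x' = phi x'' then (-1) ^ dotp x x' * (-1) ^ dotp x x'' else 0) / 4 ^ n"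
proof -
  define g where "g y = (\<Sum>x'\<in>bits n. if phi x' = y then (-1::real) ^ dotp x x' else 0)" for y
  have "simon_prob n m phi x = (\<Sum>y\<in>bits m. (g y / 2 ^ n)\<^sup>2)"
    unfolding simon_prob_def g_def
    by (intro sum.cong refl) (simp only: simon_state_eq[OF range] norm_of_real power2_abs)
  also have "\<dots> = (\<Sum>y\<in>bits m. (g y)\<^sup>2) / 4 ^ n"
    by (simp add: sum_divide_distrib power_divide power2_eq_square flip: power_mult_distrib)
  also have "(\<Sum>y\<in>bits m. (g y)\<^sup>2) = (\<Sum>x'\<in>bits n. \<Sum>x''\<in>bits n. \<Sum>y\<in>bits m.
      (if phi x' = y then (-1) ^ dotp x x' else 0) * (if phi x'' = y then (-1) ^ dotp x x'' else 0))"
    unfolding g_def power2_eq_square sum_product by (subst sum.swap) (simp add: sum.swap[of _ "bits m"])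
  also have "\<dots> = (\<Sum>x'\<in>bits n. \<Sum>x''\<in>bits n.
      if phi x' = phi x'' then (-1) ^ dotp x x' * (-1) ^ dotp x x'' else 0)"
    using range by (intro sum.cong refl) (simp add: if_distrib[of "\<lambda>t. t * _"] sum.delta cong: if_cong)
  finally show ?thesis .
qed

lemma simon_prob_nonneg: "simon_prob n m phi x \<ge> 0"
  unfolding simon_prob_def by (rule sum_nonneg) simp

definition periods :: "nat \<Rightarrow> (bool list \<Rightarrow> 'c) \<Rightarrow> bool list set" where
  "periods n phi = {d \<in> bits n. \<forall>c\<in>bits n. phi c = phi (xorl c d)}"

text \<open>The classical post-processing of the samples; it is computable by Gaussian elimination
  over GF(2).\<close>

definition orthogonal_pairs :: "nat \<Rightarrow> bool list list \<Rightarrow> (bool list \<times> bool list) set" where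
  "orthogonal_pairs n ys = {(a, b). a \<in> bits n \<and> b \<in> bits n \<and> (\<forall>y\<in>set ys. even (dotp y (xorl a b)))}"

locale simon_oracle =
  fixes n m :: nat and phi :: "bool list \<Rightarrow> bool list"
  assumes phi_in_bits: "a \<in> bits n \<Longrightarrow> phi a \<in> bits m"
    and xor_invariant: "xor_invariant n phi"
begin

abbreviation "P \<equiv> simon_prob n m phi"

abbreviation "D \<equiv> periods n phi"

lemma periods_subset_bits: "D \<subseteq> bits n"
  by (auto simp: periods_def)

lemma finite_periods [simp]: "finite D"
  using periods_subset_bits finite_bits by (rule finite_subset)

lemma replicate_False_in_periods: "replicate n False \<in> D"
  by (auto simp: periods_def bits_def xorl_replicate_False)

lemma eq_xorl_iff_periods:
  assumes x: "x \<in> bits n" and d: "d \<in> bits n"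
  shows "phi x = phi (xorl x d) \<longleftrightarrow> d \<in> D"
proof
  assume "phi x = phi (xorl x d)"
  moreover have "xorl x (xorl x d) = d"
    using x d by (simp add: xorl_xorl_cancel bits_def)
  ultimately have "phi c = phi (xorl c d)" if "c \<in> bits n" for c
    using xor_invariant x d that unfolding xor_invariant_def by (metis xorl_in_bits)
  then show "d \<in> D"
    using d unfolding periods_def by blast
qed (use x in \<open>simp add: periods_def\<close>)

lemma kernel_iff_xorl_in_periods:
  assumes "a \<in> bits n" "b \<in> bits n"
  shows "(a, b) \<in> kernel n phi \<longleftrightarrow> xorl a b \<in> D"
  using eq_xorl_iff_periods[of a "xorl a b"] assms by (simp add: kernel_def xorl_xorl_cancel bits_def)

lemma simon_prob_eq:
  assumes x: "x \<in> bits n"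
  shows "P x = (\<Sum>d\<in>D. (-1) ^ dotp x d) / 2 ^ n"
proof -
  have collisions: "(\<Sum>x''\<in>bits n. if phi x' = phi x'' then (-1) ^ dotp x x' * (-1) ^ dotp x x'' else 0)
      = (\<Sum>d\<in>D. (-1::real) ^ dotp x d)" if x': "x' \<in> bits n" for x'
  proof -
    have sign: "(-1::real) ^ dotp x x' * (-1) ^ dotp x (xorl x' d) = (-1) ^ dotp x d" if "d \<in> bits n" for d
      using x x' that parity_dotp_xorl_cancel by (simp add: bits_def)
    have "(\<Sum>x''\<in>bits n. if phi x' = phi x'' then (-1) ^ dotp x x' * (-1) ^ dotp x x'' else 0)
        = (\<Sum>d\<in>bits n. if phi x' = phi (xorl x' d) then (-1) ^ dotp x x' * (-1) ^ dotp x (xorl x' d) else 0)"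
      by (rule sum_bits_xorl_shift[OF x', symmetric])
    also have "\<dots> = (\<Sum>d\<in>bits n. if d \<in> D then (-1::real) ^ dotp x d else 0)"
      using sign eq_xorl_iff_periods[OF x'] by (intro sum.cong refl) simp
    also have "\<dots> = (\<Sum>d\<in>D. (-1) ^ dotp x d)"
      using periods_subset_bits by (simp add: sum.If_cases Int_absorb1)
    finally show ?thesis .
  qed
  have "P x = (\<Sum>x'\<in>bits n. \<Sum>d\<in>D. (-1) ^ dotp x d) / 4 ^ n"
    using simon_prob_eq_collisions[OF phi_in_bits] collisions by simp
  also have "\<dots> = (\<Sum>d\<in>D. (-1) ^ dotp x d) / 2 ^ n"
  proof -
    have "(4::real) ^ n = 2 ^ n * 2 ^ n"
      by (simp flip: power_mult_distrib)
    then show ?thesis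
      by (simp add: card_bits)
  qed
  finally show ?thesis .
qed

lemma sum_simon_prob_parity:
  assumes d: "d \<in> bits n"
  shows "(\<Sum>x\<in>bits n. P x * (-1) ^ dotp x d) = (if d \<in> D then 1 else 0)"
proof -
  have "P x * (-1) ^ dotp x d = (\<Sum>d'\<in>D. (-1) ^ dotp x (xorl d' d)) / 2 ^ n" if x: "x \<in> bits n" for x
  proof -
    have "(-1) ^ dotp x d' * (-1) ^ dotp x d = (-1::real) ^ dotp x (xorl d' d)" if "d' \<in> D" for d'
      using that x d periods_subset_bits parity_dotp_xorl[of x d' d] by (auto simp: bits_def)
    then show ?thesis
      unfolding simon_prob_eq[OF x] by (simp add: sum_distrib_right)
  qed
  then have "(\<Sum>x\<in>bits n. P x * (-1) ^ dotp x d) = (\<Sum>d'\<in>D. \<Sum>x\<in>bits n. (-1) ^ dotp x (xorl d' d)) / 2 ^ n"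
    by (simp add: sum_divide_distrib sum.swap[of _ "bits n"])
  also have "\<dots> = (\<Sum>d'\<in>D. if d' = d then 2 ^ n else 0) / 2 ^ n"
  proof -
    have "(\<Sum>x\<in>bits n. (-1::real) ^ dotp x (xorl d' d)) = (if d' = d then 2 ^ n else 0)" if "d' \<in> D" for d'
      using that d periods_subset_bits sum_bits_parity[of "xorl d' d" n] xorl_eq_replicate_False_iff[of d' d]
      by (auto simp: bits_def)
    then show ?thesis
      by simp
  qed
  also have "\<dots> = (if d \<in> D then 1 else 0)"
    by (simp add: sum.delta')
  finally show ?thesis .
qed

lemma sum_simon_prob: "(\<Sum>x\<in>bits n. P x) = 1"
  using sum_simon_prob_parity[of "replicate n False"] replicate_False_in_periods by simp

lemma sum_simon_prob_even:
  assumes d: "d \<in> bits n"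
  shows "(\<Sum>x\<in>bits n. P x * (if even (dotp x d) then 1 else 0)) = (if d \<in> D then 1 else 1 / 2)"
proof -
  have "(\<Sum>x\<in>bits n. P x * (if even (dotp x d) then 1 else 0)) =
      (\<Sum>x\<in>bits n. P x) / 2 + (\<Sum>x\<in>bits n. P x * (-1) ^ dotp x d) / 2"
    by (simp add: sum_divide_distrib flip: sum.distrib) (rule sum.cong; simp)
  then show ?thesis
    using sum_simon_prob sum_simon_prob_parity[OF d] by simp
qed

lemma even_dotp_periods_if_simon_prob_nonzero:
  assumes d: "d \<in> D" and x: "x \<in> bits n" and "P x \<noteq> 0"
  shows "even (dotp x d)"
proof (rule ccontr)
  assume odd: "odd (dotp x d)"
  have "(\<Sum>x\<in>bits n. P x * (if even (dotp x d) then 0 else 1)) =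
      (\<Sum>x\<in>bits n. P x) - (\<Sum>x\<in>bits n. P x * (if even (dotp x d) then 1 else 0))"
    by (simp flip: sum_subtractf) (rule sum.cong; simp)
  also have "\<dots> = 0"
    using d periods_subset_bits sum_simon_prob sum_simon_prob_even[of d] by auto
  finally have "P x * (if even (dotp x d) then 0 else 1) = 0"
    using x by (simp add: sum_nonneg_eq_0_iff simon_prob_nonneg)
  with odd \<open>P x \<noteq> 0\<close> show False
    by simp
qed

section \<open>Recovering the kernel\<close>

lemma kernel_subset_orthogonal_pairs:
  assumes "set ys \<subseteq> bits n" "\<forall>y\<in>set ys. P y \<noteq> 0"
  shows "kernel n phi \<subseteq> orthogonal_pairs n ys"
proof clarify
  fix a b assume ab: "(a, b) \<in> kernel n phi"
  then have "a \<in> bits n" "b \<in> bits n"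
    by (auto simp: kernel_def)
  with ab have "xorl a b \<in> D"
    using kernel_iff_xorl_in_periods by blast
  with assms \<open>a \<in> bits n\<close> \<open>b \<in> bits n\<close> show "(a, b) \<in> orthogonal_pairs n ys"
    unfolding orthogonal_pairs_def using even_dotp_periods_if_simon_prob_nonzero by blast
qed

lemma non_period_if_orthogonal_pairs_neq_kernel:
  assumes "set ys \<subseteq> bits n" "\<forall>y\<in>set ys. P y \<noteq> 0" "orthogonal_pairs n ys \<noteq> kernel n phi"
  obtains d where "d \<in> bits n - D" "\<forall>y\<in>set ys. even (dotp y d)"
proof -
  obtain a b where "(a, b) \<in> orthogonal_pairs n ys" "(a, b) \<notin> kernel n phi"
    using assms kernel_subset_orthogonal_pairs[OF assms(1,2)] by force
  then have "a \<in> bits n" "b \<in> bits n" "xorl a b \<notin> D" "\<forall>y\<in>set ys. even (dotp y (xorl a b))"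
    using kernel_iff_xorl_in_periods by (auto simp: orthogonal_pairs_def)
  then show ?thesis
    using that[of "xorl a b"] by simp
qed

lemma prob_samples_orthogonal_non_period:
  assumes "d \<in> bits n - D"
  shows "(\<Sum>ys\<in>{ys. length ys = k \<and> set ys \<subseteq> bits n}.
      \<Prod>i<k. P (ys ! i) * (if even (dotp (ys ! i) d) then 1 else 0)) = (1 / 2) ^ k"
proof -
  have half: "(\<Sum>x\<in>bits n. P x * (if even (dotp x d) then 1 else 0)) = 1 / 2"
    using assms sum_simon_prob_even[of d] by simp
  show ?thesis
    using sum_lists_length_eq_prod[OF finite_bits, where g="\<lambda>x. P x * (if even (dotp x d) then 1 else 0)"]
    by (simp only: half)
qed

lemma prod_simon_prob_le_sum_non_periods:
  assumes ys: "length ys = k" "set ys \<subseteq> bits n" and neq: "orthogonal_pairs n ys \<noteq> kernel n phi"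
  shows "(\<Prod>i<k. P (ys ! i)) \<le>
    (\<Sum>d\<in>bits n - D. \<Prod>i<k. P (ys ! i) * (if even (dotp (ys ! i) d) then 1 else 0))"
proof (cases "\<forall>y\<in>set ys. P y \<noteq> 0")
  case True
  with ys neq obtain d where d: "d \<in> bits n - D" "\<forall>y\<in>set ys. even (dotp y d)"
    using non_period_if_orthogonal_pairs_neq_kernel by blast
  then have "(\<Prod>i<k. P (ys ! i)) = (\<Prod>i<k. P (ys ! i) * (if even (dotp (ys ! i) d) then 1 else 0))"
    using ys by (auto intro!: prod.cong)
  also have "\<dots> \<le> (\<Sum>d\<in>bits n - D. \<Prod>i<k. P (ys ! i) * (if even (dotp (ys ! i) d) then 1 else 0))"
    using d(1) by (intro member_le_sum) (auto simp: simon_prob_nonneg intro!: prod_nonneg)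
  finally show ?thesis .
next
  case False
  then have "(\<Prod>i<k. P (ys ! i)) = 0"
    using ys by (auto simp: in_set_conv_nth)
  moreover have "(\<Sum>d\<in>bits n - D. \<Prod>i<k. P (ys ! i) * (if even (dotp (ys ! i) d) then 1 else 0)) \<ge> 0"
    by (auto simp: simon_prob_nonneg intro!: sum_nonneg prod_nonneg)
  ultimately show ?thesis
    by linarith
qed

lemma success_prob_orthogonal_pairs:
  "success_prob n m phi (orthogonal_pairs n) k (kernel n phi) \<ge> 1 - 2 ^ n / 2 ^ k"
proof -
  define L where "L = {ys. length ys = k \<and> set ys \<subseteq> bits n}"
  define w where "w ys = (\<Prod>i<k. P (ys ! i))" for ys
  define fails where "fails ys = (if orthogonal_pairs n ys = kernel n phi then 0 else 1 :: real)" for ys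
  have "(\<Sum>ys\<in>L. w ys * fails ys) \<le>
      (\<Sum>ys\<in>L. \<Sum>d\<in>bits n - D. \<Prod>i<k. P (ys ! i) * (if even (dotp (ys ! i) d) then 1 else 0))"
    using prod_simon_prob_le_sum_non_periods
    by (intro sum_mono) (auto simp: L_def w_def fails_def simon_prob_nonneg intro!: sum_nonneg prod_nonneg)
  also have "\<dots> = real (card (bits n - D)) / 2 ^ k"
    by (subst sum.swap) (simp add: L_def prob_samples_orthogonal_non_period power_one_over)
  also have "\<dots> \<le> 2 ^ n / 2 ^ k"
    using card_mono[of "bits n" "bits n - D"] by (simp add: card_bits divide_right_mono)
  finally have "(\<Sum>ys\<in>L. w ys * fails ys) \<le> 2 ^ n / 2 ^ k" .
  moreover have "(\<Sum>ys\<in>L. w ys) = 1"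
    using sum_lists_length_eq_prod[OF finite_bits, where g=P] sum_simon_prob by (simp add: L_def w_def)
  moreover have "success_prob n m phi (orthogonal_pairs n) k (kernel n phi) =
      (\<Sum>ys\<in>L. w ys) - (\<Sum>ys\<in>L. w ys * fails ys)"
    unfolding success_prob_def L_def w_def fails_def by (simp flip: sum_subtractf) (rule sum.cong; simp)
  ultimately show ?thesis
    by linarith
qed

end

lemma hom_power_simon_oracle:
  assumes "clone_below MPT0_gen opsB \<or> clone_below MPT1_gen opsB \<or> clone_below AP_gen opsB"
    and "carrC \<subseteq> bits m" and "is_hom_power n opsB carrC opsC phi"
  shows "simon_oracle n m phi"
proof
  show "phi a \<in> bits m" if "a \<in> bits n" for a
    using assms(2,3) that by (auto simp: is_hom_power_def)
  show "xor_invariant n phi"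
    using hom_power_xor_invariant[OF assms(1,3)] .
qed

lemma two_power_div_two_power_ceiling_le:
  fixes \<tau> :: real
  assumes "\<tau> \<ge> 1"
  shows "2 ^ n / 2 ^ nat \<lceil>real n + log 2 \<tau>\<rceil> \<le> 1 / \<tau>"
proof -
  have "(2::real) ^ n * \<tau> = 2 powr (real n + log 2 \<tau>)"
    using assms by (simp add: powr_add powr_realpow)
  also have "\<dots> \<le> 2 powr real (nat \<lceil>real n + log 2 \<tau>\<rceil>)"
    using assms by (intro powr_mono) linarith+
  also have "\<dots> = 2 ^ nat \<lceil>real n + log 2 \<tau>\<rceil>"
    by (simp add: powr_realpow)
  finally show ?thesis
    using assms by (simp add: field_simps)
qed

theorem theorem4p1:
  shows "\<exists>c::real. c > 0 \<and>
    (\<exists>post :: bool oper list \<Rightarrow> nat \<Rightarrow> bool list list \<Rightarrow> (bool list \<times> bool list) set.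
      \<forall>(opsB :: bool oper list) (n :: nat) (carrC :: bool list set) (opsC :: bool list oper list)
        (phi :: bool list \<Rightarrow> bool list) (m :: nat) (\<tau> :: real).
        (clone_below MPT0_gen opsB \<or> clone_below MPT1_gen opsB \<or> clone_below AP_gen opsB) \<and>
        similar opsB opsC \<and> is_algebra carrC opsC \<and> carrC \<subseteq> bits m \<and>
        is_hom_power n opsB carrC opsC phi \<and> \<tau> \<ge> 1
        \<longrightarrow> success_prob n m phi (post opsB n) (nat \<lceil>c * (real n + log 2 \<tau>)\<rceil>) (kernel n phi)
              \<ge> 1 - 1 / \<tau>)"
proof -
  have bound: "success_prob n m phi (orthogonal_pairs n) (nat \<lceil>real n + log 2 \<tau>\<rceil>) (kernel n phi)
      \<ge> 1 - 1 / \<tau>"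
    if "clone_below MPT0_gen opsB \<or> clone_below MPT1_gen opsB \<or> clone_below AP_gen opsB"
      and "carrC \<subseteq> bits m" and "is_hom_power n opsB carrC opsC phi" and "\<tau> \<ge> 1"
    for opsB n carrC opsC and phi :: "bool list \<Rightarrow> bool list" and m \<tau>
  proof -
    interpret simon_oracle n m phi
      using hom_power_simon_oracle[OF that(1-3)] .
    show ?thesis
      using success_prob_orthogonal_pairs[of "nat \<lceil>real n + log 2 \<tau>\<rceil>"]
        two_power_div_two_power_ceiling_le[OF \<open>\<tau> \<ge> 1\<close>, of n]
      by linarith
  qed
  show ?thesis
    by (intro exI[of _ 1] conjI exI[of _ "\<lambda>_. orthogonal_pairs"] allI impI) (auto intro: bound)
qed

end
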